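(* Let $T>0$, $\beta=1/T$, let $I\ge 2$, let $E_1,\dots,E_I>0$, and let $p_1,\dots,p_I$ be integer multiples of $2\pi T$ (the external Euclidean energies entering the $I$ vertices of a one-loop graph with $I$ vertices and $I$ internal lines). Set $u_1=0$ and $u_j=\sum_{l=2}^{j}p_l$ for $j=2,\dots,I$. Define $$D(p,E,T)=\Big(\prod_{j=1}^I 2E_j\Big)\,T\sum_{n\in\mathbb{Z}}\ \prod_{j=1}^I\frac{1}{(2\pi T n+u_j)^2+E_j^2},$$ and, for real $E_1,\dots,E_I$, $$d_l(p,E)=\prod_{j\neq l}\ \sum_{\sigma_j=\pm1}\frac{\sigma_j}{i(u_j-u_l)-E_l-\sigma_jE_j}\quad(l=1,\dots,I),\qquad D_0(p,E)=(-1)^{I+1}\sum_{l=1}^I d_l(p,E).$$ Assume that $i(u_j-u_l)+\sigma E_l+\sigma' E_j\neq 0$ for all $j\neq l$ and all $\sigma,\sigma'\in\{\pm1\}$. Then: (i) for any two distinct indices $i\neq j$ in $\{1,\dots,I\}$, $(1+\mathcal{S}_i)(1+\mathcal{S}_j)D_0(p,E)=0$ (so $D_0$ is annihilated by $\prod_{i\in C}(1+\mathcal{S}_i)$ for every set $C$ of at least two lines, i.e. every set of lines whose removal disconnects the loop); (ii) $D(p,E,T)=\Big[1+\sum_{j=1}^I n(E_j)(1+\mathcal{S}_j)\Big]D_0(p,E)=\Big[\prod_{j=1}^I\big(1+n(E_j)(1+\mathcal{S}_j)\big)\Big]D_0(p,E)$.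
   Context: $n(E)=(e^{\beta E}-1)^{-1}$ is the Bose–Einstein factor. $\mathcal{S}_j$ is the reflection operator in the variable $E_j$: $(\mathcal{S}_jf)(E_1,\dots,E_j,\dots,E_I)=f(E_1,\dots,-E_j,\dots,E_I)$. The reflections act only on $D_0$, regarded as a function of independent real variables $E_1,\dots,E_I$ (with $p$ fixed); the factors $n(E_j)$ are multiplicative constants evaluated at the given positive $E_j$, and after applying the operators one evaluates at the given positive $E_j$. *)

theory Defs
  imports "HOL-Analysis.Analysis"
begin

text \<open>Indices of lines/vertices are 1..I; external energies p and internal energies E
  are given as functions on nat (only the values at 1..I matter).\<close>

definition bose :: "real \<Rightarrow> real \<Rightarrow> real" where
  "bose T x = 1 / (exp (x / T) - 1)"

definition uvar :: "(nat \<Rightarrow> real) \<Rightarrow> nat \<Rightarrow> real" where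
  "uvar p j = (\<Sum>l\<in>{2..j}. p l)"

definition Dsum :: "nat \<Rightarrow> (nat \<Rightarrow> real) \<Rightarrow> (nat \<Rightarrow> real) \<Rightarrow> real \<Rightarrow> real" where
  "Dsum I p E T =
     (\<Prod>j\<in>{1..I}. 2 * E j) * T *
     infsum (\<lambda>n::int. \<Prod>j\<in>{1..I}. 1 / ((2 * pi * T * of_int n + uvar p j)\<^sup>2 + (E j)\<^sup>2)) UNIV"

definition dterm :: "nat \<Rightarrow> (nat \<Rightarrow> real) \<Rightarrow> (nat \<Rightarrow> real) \<Rightarrow> nat \<Rightarrow> complex" where
  "dterm I p E l =
     (\<Prod>j\<in>{1..I} - {l}. \<Sum>\<sigma>\<in>{-1, 1::real}.
        complex_of_real \<sigma> /
          (\<i> * complex_of_real (uvar p j - uvar p l) - complex_of_real (E l) - complex_of_real (\<sigma> * E j)))"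

definition D0 :: "nat \<Rightarrow> (nat \<Rightarrow> real) \<Rightarrow> (nat \<Rightarrow> real) \<Rightarrow> complex" where
  "D0 I p E = (-1) ^ (I + 1) * (\<Sum>l\<in>{1..I}. dterm I p E l)"

definition refl :: "nat \<Rightarrow> ((nat \<Rightarrow> real) \<Rightarrow> complex) \<Rightarrow> ((nat \<Rightarrow> real) \<Rightarrow> complex)" where
  "refl j f = (\<lambda>E. f (E(j := - E j)))"

definition onePlusRefl :: "nat \<Rightarrow> ((nat \<Rightarrow> real) \<Rightarrow> complex) \<Rightarrow> ((nat \<Rightarrow> real) \<Rightarrow> complex)" where
  "onePlusRefl j f = (\<lambda>E. f E + refl j f E)"

text \<open>Product over a finite set C of the operators (1 + S_i) (they commute; the
  composition is taken in increasing index order).\<close>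
definition prodOnePlusRefl :: "nat set \<Rightarrow> ((nat \<Rightarrow> real) \<Rightarrow> complex) \<Rightarrow> ((nat \<Rightarrow> real) \<Rightarrow> complex)" where
  "prodOnePlusRefl C = foldr (\<lambda>i g. onePlusRefl i \<circ> g) (sorted_list_of_set C) id"

definition bfactor :: "complex \<Rightarrow> nat \<Rightarrow> ((nat \<Rightarrow> real) \<Rightarrow> complex) \<Rightarrow> ((nat \<Rightarrow> real) \<Rightarrow> complex)" where
  "bfactor c j f = (\<lambda>E. f E + c * onePlusRefl j f E)"

end

theory Submission
  imports Defs
begin

(* Each d_l depends on E_j, j <> l, only through a sum over sigma_j = +-1 of terms in
   sigma_j E_j, so it is odd in E_j.  Hence 1 + S_j annihilates every d_l with l <> j, and two
   distinct factors 1 + S_i, 1 + S_j annihilate D_0; this is (i), and it collapses the product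
   in (ii) to the sum.

   For (ii), the Lorentzian (w_n + u_j)^2 + E_j^2, w_n = 2 pi T n, factors as
   -(i w_n - b_{j,+})(i w_n - b_{j,-}) with poles b_{j,s} = s E_j - i u_j.  Partial fractions
   reduce the Matsubara sum to the simple sums sum_n 1/(i w_n - b), which are cotangents by the
   reflection formula for the digamma function; since u_j is a multiple of 2 pi T, T times
   such a sum is -(1/2 + n(s E_j)).  The partial-fraction coefficient of b_{l,s}, multiplied by
   prod_j 2 E_j, is s d_l evaluated at E_l := -s E_l.  This gives
   D = sum_j (1/2 + n(E_j)) (1 + S_j) D_0, and since the coefficients add up to zero,
   sum_j (1 + S_j) D_0 = 2 D_0. *)

section \<open>Reflections\<close>

definition odd_in :: "nat \<Rightarrow> ((nat \<Rightarrow> real) \<Rightarrow> complex) \<Rightarrow> bool" where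
  "odd_in j f \<longleftrightarrow> (\<forall>E. f (E(j := - E j)) = - f E)"

definition prodOnePlusRefl_list ::
    "nat list \<Rightarrow> ((nat \<Rightarrow> real) \<Rightarrow> complex) \<Rightarrow> ((nat \<Rightarrow> real) \<Rightarrow> complex)" where
  "prodOnePlusRefl_list xs = foldr (\<lambda>i g. onePlusRefl i \<circ> g) xs id"

lemma prodOnePlusRefl_list_Nil [simp]: "prodOnePlusRefl_list [] f = f"
  by (simp add: prodOnePlusRefl_list_def)

lemma prodOnePlusRefl_list_Cons [simp]:
  "prodOnePlusRefl_list (i # xs) f = onePlusRefl i (prodOnePlusRefl_list xs f)"
  by (simp add: prodOnePlusRefl_list_def)

lemma onePlusRefl_odd_in: "odd_in j f \<Longrightarrow> onePlusRefl j f = (\<lambda>_. 0)"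
  by (auto simp: odd_in_def onePlusRefl_def refl_def)

lemma onePlusRefl_zero [simp]: "onePlusRefl i (\<lambda>_. 0) = (\<lambda>_. 0)"
  by (simp add: onePlusRefl_def refl_def)

lemma odd_in_onePlusRefl:
  assumes "odd_in j f"
  shows "odd_in j (onePlusRefl i f)"
proof (cases "i = j")
  case True
  then show ?thesis using onePlusRefl_odd_in[OF assms] by (simp add: odd_in_def)
next
  case False
  have "f ((E(j := - E j))(i := - E i)) = - f (E(i := - E i))" for E
    using assms False unfolding odd_in_def
    by (metis fun_upd_other fun_upd_twist)
  then show ?thesis
    using assms False by (simp add: odd_in_def onePlusRefl_def refl_def)
qed

lemma prodOnePlusRefl_list_odd_in:
  assumes "odd_in j f" "j \<in> set xs"
  shows "prodOnePlusRefl_list xs f = (\<lambda>_. 0)"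
proof -
  have "odd_in j (prodOnePlusRefl_list ys f)" for ys
    by (induction ys) (simp_all add: assms(1) odd_in_onePlusRefl)
  then show ?thesis
    using assms(2) by (induction xs) (auto simp: onePlusRefl_odd_in)
qed

lemma prodOnePlusRefl_list_scaled_sum:
  "prodOnePlusRefl_list xs (\<lambda>E. c * (\<Sum>l\<in>L. g l E))
     = (\<lambda>E. c * (\<Sum>l\<in>L. prodOnePlusRefl_list xs (g l) E))"
  by (induction xs) (simp_all add: onePlusRefl_def refl_def sum.distrib distrib_left)

lemma odd_in_dterm:
  assumes "j \<in> {1..I}" "j \<noteq> l"
  shows "odd_in j (\<lambda>E. dterm I p E l)"
  unfolding odd_in_def
proof
  fix E :: "nat \<Rightarrow> real"
  define f where "f E' j' = (\<Sum>\<sigma>\<in>{-1, 1::real}. complex_of_real \<sigma> /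
      (\<i> * complex_of_real (uvar p j' - uvar p l) - complex_of_real (E' l)
         - complex_of_real (\<sigma> * E' j')))" for E' j'
  have split: "dterm I p E' l = f E' j * (\<Prod>j'\<in>{1..I} - {l} - {j}. f E' j')" for E'
    unfolding dterm_def f_def using assms by (intro prod.remove) auto
  have "(\<Prod>j'\<in>{1..I} - {l} - {j}. f (E(j := - E j)) j') = (\<Prod>j'\<in>{1..I} - {l} - {j}. f E j')"
    using assms by (intro prod.cong) (auto simp: f_def)
  moreover have "f (E(j := - E j)) j = - f E j"
    using assms by (simp add: f_def algebra_simps)
  ultimately show "dterm I p (E(j := - E j)) l = - dterm I p E l"
    unfolding split by simp
qed

lemma prodOnePlusRefl_list_D0:
  assumes "i \<in> set xs" "j \<in> set xs" "i \<in> {1..I}" "j \<in> {1..I}" "i \<noteq> j"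
  shows "prodOnePlusRefl_list xs (D0 I p) = (\<lambda>_. 0)"
proof -
  have "prodOnePlusRefl_list xs (\<lambda>E. dterm I p E l) = (\<lambda>_. 0)" for l
  proof (cases "l = i")
    case True
    then show ?thesis using assms by (intro prodOnePlusRefl_list_odd_in[OF odd_in_dterm, of j]) auto
  next
    case False
    then show ?thesis using assms by (intro prodOnePlusRefl_list_odd_in[OF odd_in_dterm, of i]) auto
  qed
  then show ?thesis
    unfolding D0_def[abs_def] prodOnePlusRefl_list_scaled_sum by simp
qed

lemma onePlusRefl_pair_D0:
  assumes "i \<in> {1..I}" "j \<in> {1..I}" "i \<noteq> j"
  shows "onePlusRefl i (onePlusRefl j (D0 I p)) = (\<lambda>_. 0)"
  using prodOnePlusRefl_list_D0[of i "[i, j]" j] assms by simp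

lemma prodOnePlusRefl_D0:
  assumes "C \<subseteq> {1..I}" "card C \<ge> 2"
  shows "prodOnePlusRefl C (D0 I p) = (\<lambda>_. 0)"
proof -
  have "finite C"
    using assms(1) finite_subset by blast
  moreover obtain i j where "i \<in> C" "j \<in> C" "i \<noteq> j"
    using assms(2) card_le_Suc0_iff_eq[OF \<open>finite C\<close>] by auto
  ultimately have "prodOnePlusRefl_list (sorted_list_of_set C) (D0 I p) = (\<lambda>_. 0)"
    using assms(1) by (intro prodOnePlusRefl_list_D0[of i _ j]) auto
  then show ?thesis
    by (simp add: prodOnePlusRefl_def prodOnePlusRefl_list_def)
qed

lemma onePlusRefl_D0:
  assumes "j \<in> {1..I}"
  shows "onePlusRefl j (D0 I p) E
           = (-1) ^ (I + 1) * (dterm I p E j + dterm I p (E(j := - E j)) j)"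
proof -
  have remove_j: "(\<Sum>l\<in>{1..I}. g l) = g j + (\<Sum>l\<in>{1..I} - {j}. g l)" for g :: "nat \<Rightarrow> complex"
    using assms by (intro sum.remove) auto
  have "dterm I p (E(j := - E j)) l = - dterm I p E l" if "l \<in> {1..I} - {j}" for l
    using odd_in_dterm[of j I l p] assms that unfolding odd_in_def by auto
  then have "(\<Sum>l\<in>{1..I} - {j}. dterm I p (E(j := - E j)) l) = - (\<Sum>l\<in>{1..I} - {j}. dterm I p E l)"
    by (simp add: sum_negf)
  then show ?thesis
    unfolding onePlusRefl_def refl_def D0_def remove_j by (simp add: algebra_simps)
qed

lemma foldr_bfactor:
  assumes "distinct xs"
    and "\<And>i j. i \<in> set xs \<Longrightarrow> j \<in> set xs \<Longrightarrow> i \<noteq> j \<Longrightarrow> onePlusRefl i (onePlusRefl j f) = (\<lambda>_. 0)"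
  shows "foldr (\<lambda>j g. bfactor (c j) j \<circ> g) xs id f
           = (\<lambda>E. f E + (\<Sum>j\<in>set xs. c j * onePlusRefl j f E))"
  using assms
proof (induction xs)
  case Nil
  then show ?case by simp
next
  case (Cons i xs)
  define G where "G = foldr (\<lambda>j g. bfactor (c j) j \<circ> g) xs id f"
  have G: "G = (\<lambda>E. f E + (\<Sum>j\<in>set xs. c j * onePlusRefl j f E))"
    unfolding G_def by (rule Cons.IH) (use Cons.prems in auto)
  have "onePlusRefl i (onePlusRefl j f) E = 0" if "j \<in> set xs" for j E
    using Cons.prems that by force
  moreover have "onePlusRefl i G E
      = onePlusRefl i f E + (\<Sum>j\<in>set xs. c j * onePlusRefl i (onePlusRefl j f) E)" for E
    unfolding G onePlusRefl_def refl_def by (simp add: sum.distrib algebra_simps)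
  ultimately have opG: "onePlusRefl i G = onePlusRefl i f"
    by auto
  have "foldr (\<lambda>j g. bfactor (c j) j \<circ> g) (i # xs) id f = bfactor (c i) i G"
    by (simp add: G_def)
  also have "\<dots> = (\<lambda>E. f E + (\<Sum>j\<in>set (i # xs). c j * onePlusRefl j f E))"
    using Cons.prems unfolding bfactor_def opG by (simp add: G algebra_simps)
  finally show ?case .
qed

section \<open>Partial fractions and the cotangent series\<close>

definition pf_coeff :: "('k \<Rightarrow> 'a::field) \<Rightarrow> 'k set \<Rightarrow> 'k \<Rightarrow> 'a" where
  "pf_coeff b K k = (\<Prod>k'\<in>K - {k}. 1 / (b k - b k'))"

lemma pf_coeff_insert:
  assumes "finite K" "a \<notin> K" "k \<in> K"
  shows "pf_coeff b (insert a K) k = pf_coeff b K k / (b k - b a)"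
proof -
  have "insert a K - {k} = insert a (K - {k})"
    using assms by auto
  then show ?thesis
    using assms by (simp add: pf_coeff_def)
qed

lemma partial_fractions_two:
  fixes a k x c :: "'a::field"
  assumes "a \<noteq> k" "x \<noteq> a" "x \<noteq> k"
  shows "1 / (x - a) * (c / (x - k)) = c / (a - k) / (x - a) + c / (k - a) / (x - k)"
proof -
  have "x - a \<noteq> 0" "x - k \<noteq> 0" "a - k \<noteq> 0" "k - a \<noteq> 0"
    using assms by auto
  then show ?thesis
    by (simp add: divide_simps) (simp add: algebra_simps)
qed

lemma prod_inverse_eq_sum_pf_coeff:
  assumes "finite K" "K \<noteq> {}" "inj_on b K" "x \<notin> b ` K"
  shows "(\<Prod>k\<in>K. 1 / (x - b k)) = (\<Sum>k\<in>K. pf_coeff b K k / (x - b k))"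
  using assms
proof (induction K arbitrary: x rule: finite_ne_induct)
  case (singleton a)
  then show ?case by (simp add: pf_coeff_def)
next
  case (insert a K)
  have inj: "inj_on b K" and ba: "b a \<notin> b ` K"
    using insert.prems insert.hyps by auto
  have xa: "x \<noteq> b a" and xk: "\<And>k. k \<in> K \<Longrightarrow> x \<noteq> b k"
    using insert.prems by auto
  have split: "1 / (x - b a) * (pf_coeff b K k / (x - b k))
      = pf_coeff b K k / (b a - b k) / (x - b a) + pf_coeff b (insert a K) k / (x - b k)"
    if "k \<in> K" for k
  proof -
    have "b a \<noteq> b k"
      using ba that by auto
    then have "1 / (x - b a) * (pf_coeff b K k / (x - b k))
        = pf_coeff b K k / (b a - b k) / (x - b a) + pf_coeff b K k / (b k - b a) / (x - b k)"
      using xa xk[OF that] by (rule partial_fractions_two)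
    then show ?thesis
      unfolding pf_coeff_insert[OF insert.hyps(1,3) that] .
  qed
  have "pf_coeff b (insert a K) a = (\<Prod>k\<in>K. 1 / (b a - b k))"
    unfolding pf_coeff_def using insert.hyps by simp
  also have "\<dots> = (\<Sum>k\<in>K. pf_coeff b K k / (b a - b k))"
    by (rule insert.IH[OF inj ba])
  finally have a_coeff: "pf_coeff b (insert a K) a / (x - b a)
      = (\<Sum>k\<in>K. pf_coeff b K k / (b a - b k) / (x - b a))"
    by (simp add: sum_divide_distrib)
  have "(\<Prod>k\<in>insert a K. 1 / (x - b k))
      = (\<Sum>k\<in>K. 1 / (x - b a) * (pf_coeff b K k / (x - b k)))"
    using insert.hyps insert.IH[OF inj] insert.prems by (simp add: sum_distrib_left)
  also have "\<dots>
      = (\<Sum>k\<in>K. pf_coeff b K k / (b a - b k) / (x - b a) + pf_coeff b (insert a K) k / (x - b k))"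
    using split by (rule sum.cong[OF refl])
  also have "\<dots> = (\<Sum>k\<in>insert a K. pf_coeff b (insert a K) k / (x - b k))"
    using insert.hyps by (simp add: sum.distrib a_coeff)
  finally show ?case .
qed

lemma sum_pf_coeff_eq_0:
  assumes "finite K" "card K \<ge> 2" "inj_on b K"
  shows "(\<Sum>k\<in>K. pf_coeff b K k) = 0"
proof -
  have "K \<noteq> {}"
    using assms(2) by auto
  then obtain a where a: "a \<in> K"
    by blast
  define K' where "K' = K - {a}"
  have K: "K = insert a K'" "a \<notin> K'" "finite K'"
    using a assms(1) by (auto simp: K'_def)
  have "card K' = card K - 1"
    using assms(1) a by (simp add: K'_def)
  then have "K' \<noteq> {}"
    using assms(2) by auto
  moreover have "inj_on b K'" "b a \<notin> b ` K'"
    using assms(3) K by (auto simp: inj_on_def)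
  ultimately have "pf_coeff b K a = (\<Sum>k\<in>K'. pf_coeff b K' k / (b a - b k))"
    using K(3) by (simp add: pf_coeff_def K'_def prod_inverse_eq_sum_pf_coeff)
  also have "\<dots> = (\<Sum>k\<in>K'. - pf_coeff b K k)"
  proof (rule sum.cong[OF refl])
    fix k
    assume "k \<in> K'"
    then have "pf_coeff b K k = pf_coeff b K' k / (b k - b a)"
      unfolding K(1) using K(2,3) by (intro pf_coeff_insert)
    then show "pf_coeff b K' k / (b a - b k) = - pf_coeff b K k"
      by (simp flip: divide_minus_right)
  qed
  finally show ?thesis
    using K by (simp add: sum_negf)
qed

lemma Digamma_reflection_complex:
  fixes z :: complex
  assumes z: "z \<notin> \<int>"
  shows "Digamma (1 - z) - Digamma z = of_real pi * cot (of_real pi * z)"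
proof -
  have z1: "z \<notin> \<int>\<^sub>\<le>\<^sub>0" "1 - z \<notin> \<int>\<^sub>\<le>\<^sub>0"
    using z nonpos_Ints_subset_Ints Ints_diff[of 1 "1 - z"] by auto
  have "((\<lambda>w. rGamma w * rGamma (1 - w)) has_field_derivative
      rGamma z * rGamma (1 - z) * (Digamma (1 - z) - Digamma z)) (at z)"
    using z1 by (auto intro!: derivative_eq_intros simp: algebra_simps)
  moreover have
    "((\<lambda>w. sin (of_real pi * w) / of_real pi) has_field_derivative cos (of_real pi * z)) (at z)"
    by (auto intro!: derivative_eq_intros)
  moreover have "(\<lambda>w::complex. rGamma w * rGamma (1 - w)) = (\<lambda>w. sin (of_real pi * w) / of_real pi)"
    by (rule ext) (rule rGamma_reflection_complex)
  ultimately have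
    "sin (of_real pi * z) / of_real pi * (Digamma (1 - z) - Digamma z) = cos (of_real pi * z)"
    using DERIV_unique by (metis rGamma_reflection_complex)
  moreover have "sin (of_real pi * z) \<noteq> 0"
  proof
    assume "sin (of_real pi * z) = 0"
    then obtain n :: int where "of_real pi * z = of_real (of_int n * pi)"
      by (auto simp: sin_eq_0)
    then have "z = of_int n"
      by (simp add: field_simps)
    then show False
      using z by simp
  qed
  ultimately show ?thesis
    by (simp add: cot_def field_simps)
qed

lemma sums_inverse_Digamma_diff:
  fixes z :: complex
  assumes z: "z \<notin> \<int>"
  shows "(\<lambda>k. inverse (z + of_nat k) - inverse (1 - z + of_nat k))
           sums (Digamma (1 - z) - Digamma z)"
proof -
  have "z \<noteq> 0" "1 - z \<noteq> 0"
    using z by auto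
  then have "(\<lambda>k. inverse (of_nat (Suc k)) - inverse (1 - z + of_nat k))
      sums (Digamma (1 - z) + euler_mascheroni)"
    and "(\<lambda>k. inverse (of_nat (Suc k)) - inverse (z + of_nat k)) sums (Digamma z + euler_mascheroni)"
    using summable_Digamma[of "1 - z"] summable_Digamma[of z]
    by (simp_all add: Digamma_def summable_sums)
  from sums_diff[OF this] show ?thesis
    by simp
qed

lemma sum_inverse_symmetric_interval:
  fixes z :: complex
  shows "(\<Sum>n\<in>{- int M..<int M}. inverse (z + of_int n))
       = (\<Sum>k<M. inverse (z + of_nat k) - inverse (1 - z + of_nat k))"
proof (induction M)
  case 0
  then show ?case by simp
next
  case (Suc M)
  have "{- int (Suc M)..<int (Suc M)} = insert (- int M - 1) (insert (int M) {- int M..<int M})"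
    by auto
  moreover have "inverse (z + of_int (- int M - 1)) = - inverse (1 - z + of_nat M)"
    by (simp flip: inverse_minus_eq)
  ultimately show ?case
    using Suc by simp
qed

lemma tendsto_sum_inverse_cot:
  fixes z :: complex
  assumes "z \<notin> \<int>"
  shows "(\<lambda>M. \<Sum>n\<in>{- int M..<int M}. 1 / (z + of_int n)) \<longlonglongrightarrow> of_real pi * cot (of_real pi * z)"
proof -
  have "(\<lambda>M. \<Sum>n\<in>{- int M..<int M}. inverse (z + of_int n)) \<longlonglongrightarrow> Digamma (1 - z) - Digamma z"
    using sums_inverse_Digamma_diff[OF assms] by (simp add: sums_def sum_inverse_symmetric_interval)
  then show ?thesis
    by (simp add: Digamma_reflection_complex[OF assms] inverse_eq_divide)
qed

lemma cot_eq_exp: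
  fixes w :: complex
  assumes "sin w \<noteq> 0"
  shows "cot w = \<i> * (exp (2 * \<i> * w) + 1) / (exp (2 * \<i> * w) - 1)"
proof -
  define e where "e = exp (\<i> * w)"
  have e0: "e \<noteq> 0"
    by (simp add: e_def)
  have e2: "exp (2 * \<i> * w) = e * e"
    by (simp add: e_def mult.assoc flip: exp_add)
  have sin: "sin w = (e - 1 / e) / (2 * \<i>)" and cos: "cos w = (e + 1 / e) / 2"
    by (simp_all add: sin_exp_eq cos_exp_eq e_def exp_minus inverse_eq_divide)
  have "e * e - 1 \<noteq> 0"
    using assms e0 unfolding sin by (auto simp: field_simps)
  then show ?thesis
    unfolding cot_def sin cos e2 using e0 by (simp add: field_simps)
qed

lemma filterlim_symmetric_int_intervals:
  "filterlim (\<lambda>M::nat. {- int M..<int M}) (finite_subsets_at_top (UNIV :: int set)) sequentially"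
  unfolding filterlim_finite_subsets_at_top
proof (intro allI impI)
  fix X :: "int set"
  assume "finite X \<and> X \<subseteq> UNIV"
  then obtain m where m: "\<forall>x\<in>X. nat \<bar>x\<bar> < m"
    using finite_nat_set_iff_bounded[of "(\<lambda>x. nat \<bar>x\<bar>) ` X"] by auto
  show "\<forall>\<^sub>F M in sequentially.
      finite {- int M..<int M} \<and> X \<subseteq> {- int M..<int M} \<and> {- int M..<int M} \<subseteq> UNIV"
    using eventually_ge_at_top[of m] by eventually_elim (use m in force)
qed

lemma tendsto_infsum_symmetric_partial_sums:
  fixes h :: "int \<Rightarrow> 'a::{comm_monoid_add, t2_space}"
  assumes "h summable_on UNIV"
  shows "(\<lambda>M. \<Sum>n\<in>{- int M..<int M}. h n) \<longlonglongrightarrow> infsum h UNIV"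
  using filterlim_compose[OF _ filterlim_symmetric_int_intervals] assms has_sum_infsum
  unfolding has_sum_def by blast

lemma summable_on_int_even:
  fixes g :: "int \<Rightarrow> real"
  assumes "\<And>n. g (- n) = g n" "\<And>n. g n \<ge> 0" "summable (\<lambda>n::nat. g (int n))"
  shows "g summable_on UNIV"
proof -
  have nat: "(\<lambda>n::nat. g (int n)) summable_on UNIV"
    using assms(2,3) by (intro norm_summable_imp_summable_on) simp
  have "g summable_on range int" "g summable_on range (\<lambda>n::nat. - int n)"
    using nat assms(1) by (subst summable_on_reindex; simp add: o_def inj_on_def)+
  moreover have "x \<in> range int \<union> range (\<lambda>n::nat. - int n)" for x :: int
    by (cases "x \<ge> 0") (auto intro!: image_eqI[of _ _ "nat \<bar>x\<bar>"])
  ultimately show ?thesis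
    by (metis summable_on_union UNIV_eq_I)
qed

lemma summable_on_inverse_square_plus:
  fixes a c :: real
  assumes "a > 0"
  shows "(\<lambda>n::int. 1 / ((a * of_int n)\<^sup>2 + c\<^sup>2)) summable_on UNIV"
proof (rule summable_on_int_even)
  show "summable (\<lambda>n::nat. 1 / ((a * of_int (int n))\<^sup>2 + c\<^sup>2))"
  proof (rule summable_comparison_test')
    show "summable (\<lambda>n::nat. inverse (a\<^sup>2) * inverse (of_nat n ^ 2 :: real))"
      by (intro summable_mult inverse_power_summable) simp
    fix n :: nat
    assume "n \<ge> 1"
    then have "(a * real n)\<^sup>2 > 0"
      using assms by simp
    then have "1 / ((a * real n)\<^sup>2 + c\<^sup>2) \<le> 1 / (a * real n)\<^sup>2"
      by (intro divide_left_mono) (auto intro!: mult_pos_pos add_pos_nonneg)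
    then show "norm (1 / ((a * of_int (int n))\<^sup>2 + c\<^sup>2))
        \<le> inverse (a\<^sup>2) * inverse (of_nat n ^ 2 :: real)"
      by (simp add: power_mult_distrib field_simps)
  qed
qed (simp_all add: power2_eq_square)

section \<open>Matsubara sums\<close>

definition matsubara_freq :: "real \<Rightarrow> int \<Rightarrow> complex" where
  "matsubara_freq T n = \<i> * of_real (2 * pi * T * of_int n)"

definition matsubara_sum :: "real \<Rightarrow> complex \<Rightarrow> complex" where
  "matsubara_sum T b =
     of_real pi * cot (of_real pi * (\<i> * b / of_real (2 * pi * T))) / (\<i> * of_real (2 * pi * T))"

lemma tendsto_matsubara_sum:
  assumes T: "T > 0" and b: "Re b \<noteq> 0"
  shows "(\<lambda>M. \<Sum>n\<in>{- int M..<int M}. 1 / (matsubara_freq T n - b)) \<longlonglongrightarrow> matsubara_sum T b"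
proof -
  define c where "c = \<i> * complex_of_real (2 * pi * T)"
  define z where "z = \<i> * b / of_real (2 * pi * T)"
  have "c \<noteq> 0"
    using T by (simp add: c_def)
  have "Im z \<noteq> 0"
    using T b by (simp add: z_def Im_divide_of_real)
  then have "z \<notin> \<int>"
    by (auto simp: complex_is_Int_iff)
  have "matsubara_freq T n - b = c * (z + of_int n)" for n
    using \<open>c \<noteq> 0\<close> by (simp add: matsubara_freq_def z_def c_def field_simps)
  then have "(\<Sum>n\<in>N. 1 / (matsubara_freq T n - b)) = (\<Sum>n\<in>N. 1 / (z + of_int n)) / c" for N
    by (simp add: sum_divide_distrib mult.commute)
  moreover have "(\<lambda>M. (\<Sum>n\<in>{- int M..<int M}. 1 / (z + of_int n)) / c)
      \<longlonglongrightarrow> of_real pi * cot (of_real pi * z) / c"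
    using tendsto_sum_inverse_cot[OF \<open>z \<notin> \<int>\<close>] tendsto_const \<open>c \<noteq> 0\<close> by (rule tendsto_divide)
  ultimately show ?thesis
    by (simp add: matsubara_sum_def z_def c_def)
qed

lemma T_mult_matsubara_sum:
  assumes T: "T > 0" and x: "x \<noteq> 0" and u: "u = 2 * pi * T * of_int m"
  shows "of_real T * matsubara_sum T (of_real x - \<i> * of_real u) = - (1 / 2 + of_real (bose T x))"
proof -
  define w where "w = of_real pi * (\<i> * (of_real x - \<i> * of_real u) / of_real (2 * pi * T))"
  define q where "q = exp (- x / T)"
  have w: "w = (of_real u + \<i> * of_real x) / of_real (2 * T)"
    using T unfolding w_def by (simp add: field_simps)
  have "sin w \<noteq> 0"
  proof
    assume "sin w = 0"
    then obtain n :: int where "w = of_real (of_int n * pi)"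
      by (auto simp: sin_eq_0)
    then have "Im w = 0"
      by simp
    moreover have "Im w = x / (2 * T)"
      unfolding w by (simp add: Im_divide_of_real)
    ultimately show False
      using T x by simp
  qed
  have "2 * \<i> * w = of_real (- x / T) + \<i> * (of_int m * (of_real pi * 2))"
    using T unfolding w u by (simp add: field_simps)
  then have exp_w: "exp (2 * \<i> * w) = of_real q"
    by (simp only: q_def exp_plus_2pin exp_of_real)
  have "exp (x / T) \<noteq> 1"
    using T x by simp
  moreover have q: "q = 1 / exp (x / T)"
    by (simp add: q_def exp_minus inverse_eq_divide)
  ultimately have "complex_of_real q - 1 \<noteq> 0"
    by simp
  have "of_real T * matsubara_sum T (of_real x - \<i> * of_real u)
      = of_real T * (of_real pi * cot w / (\<i> * of_real (2 * pi * T)))"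
    by (simp only: matsubara_sum_def w_def)
  also have "\<dots> = cot w / (2 * \<i>)"
    using T by (simp add: field_simps)
  also have "\<dots> = of_real ((q + 1) / (2 * (q - 1)))"
    unfolding cot_eq_exp[OF \<open>sin w \<noteq> 0\<close>] exp_w using \<open>complex_of_real q - 1 \<noteq> 0\<close>
    by (simp add: field_simps)
  also have "(q + 1) / (2 * (q - 1)) = - (1 / 2 + bose T x)"
    using \<open>exp (x / T) \<noteq> 1\<close> unfolding q by (simp add: bose_def field_simps)
  finally show ?thesis
    by simp
qed

lemma infsum_eq_sum_pf_coeff_matsubara_sum:
  fixes b :: "'k \<Rightarrow> complex" and h :: "int \<Rightarrow> real"
  assumes T: "T > 0" and K: "finite K" "K \<noteq> {}" "inj_on b K" "\<And>k. k \<in> K \<Longrightarrow> Re (b k) \<noteq> 0"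
    and h: "h summable_on UNIV" "\<And>n. of_real (h n) = c * (\<Prod>k\<in>K. 1 / (matsubara_freq T n - b k))"
  shows "of_real (infsum h UNIV) = c * (\<Sum>k\<in>K. pf_coeff b K k * matsubara_sum T (b k))"
proof -
  have "Re (matsubara_freq T n) = 0" for n
    by (simp add: matsubara_freq_def)
  then have "matsubara_freq T n \<notin> b ` K" for n
    using K(4) by (metis imageE)
  then have partial: "of_real (\<Sum>n\<in>N. h n)
      = c * (\<Sum>k\<in>K. pf_coeff b K k * (\<Sum>n\<in>N. 1 / (matsubara_freq T n - b k)))" for N
    using K by (simp add: h(2) prod_inverse_eq_sum_pf_coeff sum_distrib_left sum.swap[of _ N])
  have "(\<lambda>M. complex_of_real (\<Sum>n\<in>{- int M..<int M}. h n)) \<longlonglongrightarrow> of_real (infsum h UNIV)"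
    using h(1) by (intro tendsto_of_real tendsto_infsum_symmetric_partial_sums)
  moreover have "(\<lambda>M. complex_of_real (\<Sum>n\<in>{- int M..<int M}. h n))
      \<longlonglongrightarrow> c * (\<Sum>k\<in>K. pf_coeff b K k * matsubara_sum T (b k))"
    unfolding partial using T K(4) by (intro tendsto_intros tendsto_matsubara_sum)
  ultimately show ?thesis
    by (rule LIMSEQ_unique)
qed

section \<open>The one-loop graph\<close>

definition pole :: "(nat \<Rightarrow> real) \<Rightarrow> (nat \<Rightarrow> real) \<Rightarrow> nat \<times> real \<Rightarrow> complex" where
  "pole p E k = of_real (snd k * E (fst k)) - \<i> * of_real (uvar p (fst k))"

definition poles :: "nat \<Rightarrow> (nat \<times> real) set" where
  "poles I = {1..I} \<times> {-1, 1}"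

lemma sum_poles: "(\<Sum>k\<in>poles I. f k) = (\<Sum>j\<in>{1..I}. f (j, -1) + f (j, 1))"
  unfolding poles_def sum.cartesian_product' by simp

locale one_loop =
  fixes T :: real and I :: nat and E p :: "nat \<Rightarrow> real"
  assumes T_pos: "T > 0"
    and I_pos: "I > 0"
    and E_pos: "\<forall>j\<in>{1..I}. E j > 0"
    and p_matsubara: "\<forall>j\<in>{1..I}. \<exists>k::int. p j = 2 * pi * T * of_int k"
    and nondeg: "\<forall>j\<in>{1..I}. \<forall>l\<in>{1..I}. \<forall>\<sigma>\<in>{-1, 1::real}. \<forall>\<sigma>'\<in>{-1, 1::real}.
                   j \<noteq> l \<longrightarrow>
                   \<i> * complex_of_real (uvar p j - uvar p l) + complex_of_real (\<sigma> * E l)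
                     + complex_of_real (\<sigma>' * E j) \<noteq> 0"
begin

definition summand :: "int \<Rightarrow> real" where
  "summand n = (\<Prod>j\<in>{1..I}. 1 / ((2 * pi * T * of_int n + uvar p j)\<^sup>2 + (E j)\<^sup>2))"

lemma E_gt_0: "j \<in> {1..I} \<Longrightarrow> E j > 0"
  using E_pos by blast

lemma uvar_matsubara:
  assumes "j \<le> I"
  obtains m :: int where "uvar p j = 2 * pi * T * of_int m"
proof -
  obtain k :: "nat \<Rightarrow> int" where k: "\<forall>l\<in>{1..I}. p l = 2 * pi * T * of_int (k l)"
    using p_matsubara by metis
  have "uvar p j = 2 * pi * T * of_int (\<Sum>l\<in>{2..j}. k l)"
    unfolding uvar_def using assms k by (simp add: sum_distrib_left)
  then show ?thesis
    using that by blast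
qed

lemma Re_pole:
  assumes "k \<in> poles I"
  shows "Re (pole p E k) \<noteq> 0"
  using assms E_gt_0[of "fst k"] by (auto simp: pole_def poles_def)

lemma inj_on_pole: "inj_on (pole p E) (poles I)"
proof (rule inj_onI)
  fix k k'
  assume "k \<in> poles I" "k' \<in> poles I" and eq: "pole p E k = pole p E k'"
  then obtain j s l t where k: "k = (j, s)" "j \<in> {1..I}" "s \<in> {-1, 1}"
    and k': "k' = (l, t)" "l \<in> {1..I}" "t \<in> {-1, 1}"
    by (auto simp: poles_def)
  show "k = k'"
  proof (cases "j = l")
    case True
    then have "s * E j = t * E j"
      using eq k k' by (simp add: pole_def complex_eq_iff)
    then show ?thesis
      using True k k' E_gt_0[of j] by auto
  next
    case False
    have "\<i> * complex_of_real (uvar p j - uvar p l) + complex_of_real (t * E l)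
        + complex_of_real ((- s) * E j) = pole p E k' - pole p E k"
      using k k' by (simp add: pole_def algebra_simps)
    moreover have "\<i> * complex_of_real (uvar p j - uvar p l) + complex_of_real (t * E l)
        + complex_of_real ((- s) * E j) \<noteq> 0"
      using nondeg[rule_format, of j l t "- s"] k k' False by auto
    ultimately show ?thesis
      using eq by simp
  qed
qed

lemma summand_eq_prod_poles:
  "of_real (summand n) = (-1) ^ I * (\<Prod>k\<in>poles I. 1 / (matsubara_freq T n - pole p E k))"
proof -
  have factor: "complex_of_real (1 / ((2 * pi * T * of_int n + uvar p j)\<^sup>2 + (E j)\<^sup>2))
      = - (1 / (matsubara_freq T n - pole p E (j, -1))
           * (1 / (matsubara_freq T n - pole p E (j, 1))))"
    if "j \<in> {1..I}" for j
  proof -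
    define w where "w = 2 * pi * T * of_int n + uvar p j"
    have "(matsubara_freq T n - pole p E (j, -1)) * (matsubara_freq T n - pole p E (j, 1))
        = - complex_of_real (w\<^sup>2 + (E j)\<^sup>2)"
      by (simp add: matsubara_freq_def pole_def w_def algebra_simps power2_eq_square)
    then have "complex_of_real (1 / (w\<^sup>2 + (E j)\<^sup>2))
        = - (1 / ((matsubara_freq T n - pole p E (j, -1))
                  * (matsubara_freq T n - pole p E (j, 1))))"
      by (simp only: of_real_divide of_real_1 divide_minus_right minus_minus)
    then show ?thesis
      unfolding w_def[symmetric] by simp
  qed
  have "of_real (summand n)
      = (\<Prod>j\<in>{1..I}. - (1 / (matsubara_freq T n - pole p E (j, -1))
                          * (1 / (matsubara_freq T n - pole p E (j, 1)))))"
    unfolding summand_def of_real_prod by (rule prod.cong[OF refl factor])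
  also have "\<dots> = (-1) ^ I * (\<Prod>k\<in>poles I. 1 / (matsubara_freq T n - pole p E k))"
    by (simp add: poles_def prod.cartesian_product' prod_uminus prod.distrib)
  finally show ?thesis .
qed

lemma summable_summand: "summand summable_on UNIV"
proof -
  define B where "B = (\<Prod>j\<in>{2..I}. 1 / (E j)\<^sup>2)"
  define g where "g n = 1 / ((2 * pi * T * of_int n)\<^sup>2 + (E 1)\<^sup>2)" for n :: int
  have "g summable_on UNIV"
    unfolding g_def using summable_on_inverse_square_plus[of "2 * pi * T" "E 1"] T_pos
    by (simp add: mult.assoc)
  then have "(\<lambda>n. B * g n) summable_on UNIV"
    by (rule summable_on_cmult_right)
  then show ?thesis
  proof (rule summable_on_comparison_test)
    fix n :: int
    have "{1..I} = insert 1 {2..I}"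
      using I_pos by auto
    then have "summand n = g n * (\<Prod>j\<in>{2..I}. 1 / ((2 * pi * T * of_int n + uvar p j)\<^sup>2 + (E j)\<^sup>2))"
      by (simp add: summand_def g_def uvar_def)
    also have "\<dots> \<le> g n * B"
      unfolding B_def
    proof (intro mult_left_mono prod_mono conjI)
      fix j
      assume "j \<in> {2..I}"
      then have "E j > 0"
        using E_gt_0 by simp
      then show "1 / ((2 * pi * T * of_int n + uvar p j)\<^sup>2 + (E j)\<^sup>2) \<le> 1 / (E j)\<^sup>2"
        by (intro divide_left_mono) (auto intro!: mult_pos_pos add_nonneg_pos)
    qed (auto simp: g_def)
    finally show "summand n \<le> B * g n"
      by (simp add: mult.commute)
  next
    show "0 \<le> summand n" for n
      unfolding summand_def by (intro prod_nonneg) auto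
  qed
qed

lemma two_E_mult_pole_pair:
  assumes l: "l \<in> {1..I}" and s: "s \<in> {-1, 1::real}" and j: "j \<in> {1..I}" "j \<noteq> l"
  shows "of_real (2 * E j) * (\<Prod>t\<in>{-1, 1::real}. 1 / (pole p E (l, s) - pole p E (j, t)))
       = (\<Sum>\<sigma>\<in>{-1, 1::real}. complex_of_real \<sigma> /
            (\<i> * complex_of_real (uvar p j - uvar p l) + of_real (s * E l) - of_real (\<sigma> * E j)))"
proof -
  define w where "w = \<i> * complex_of_real (uvar p j - uvar p l) + of_real (s * E l)"
  have "w + of_real (E j) \<noteq> 0" "w - of_real (E j) \<noteq> 0"
    using nondeg[rule_format, of j l s 1] nondeg[rule_format, of j l s "-1"] j l s
    by (simp_all add: w_def)
  then have "of_real (2 * E j) * (1 / (w + of_real (E j)) * (1 / (w - of_real (E j))))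
      = - (1 / (w + of_real (E j))) + 1 / (w - of_real (E j))"
    by (simp add: field_simps)
  moreover have "pole p E (l, s) - pole p E (j, t) = w - of_real (t * E j)" for t
    by (simp add: pole_def w_def algebra_simps)
  ultimately show ?thesis
    by (simp add: w_def)
qed

lemma pf_coeff_pole:
  assumes l: "l \<in> {1..I}" and s: "s \<in> {-1, 1::real}"
  shows "complex_of_real (\<Prod>j\<in>{1..I}. 2 * E j) * pf_coeff (pole p E) (poles I) (l, s)
         = of_real s * dterm I p (E(l := - s * E l)) l"
proof -
  define b where "b = pole p E"
  define f where "f j = (\<Prod>t\<in>{-1, 1::real}. 1 / (b (l, s) - b (j, t)))" for j
  have "poles I - {(l, s)} = insert (l, - s) (({1..I} - {l}) \<times> {-1, 1})"
    using l s by (auto simp: poles_def)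
  then have coeff:
    "pf_coeff b (poles I) (l, s) = 1 / (b (l, s) - b (l, - s)) * (\<Prod>j\<in>{1..I} - {l}. f j)"
    unfolding pf_coeff_def f_def by (simp add: prod.cartesian_product')
  have P: "complex_of_real (\<Prod>j\<in>{1..I}. 2 * E j)
      = of_real (2 * E l) * (\<Prod>j\<in>{1..I} - {l}. of_real (2 * E j))"
    unfolding of_real_prod using l by (simp add: prod.remove)
  have residue_l: "of_real (2 * E l) * (1 / (b (l, s) - b (l, - s))) = complex_of_real s"
    using s E_gt_0[OF l] by (auto simp: b_def pole_def algebra_simps)
  have residues_j: "(\<Prod>j\<in>{1..I} - {l}. of_real (2 * E j) * f j) = dterm I p (E(l := - s * E l)) l"
    unfolding dterm_def
  proof (rule prod.cong[OF refl])
    fix j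
    assume "j \<in> {1..I} - {l}"
    then show "of_real (2 * E j) * f j = (\<Sum>\<sigma>\<in>{-1, 1::real}. complex_of_real \<sigma> /
        (\<i> * complex_of_real (uvar p j - uvar p l) - complex_of_real ((E(l := - s * E l)) l)
          - complex_of_real (\<sigma> * (E(l := - s * E l)) j)))"
      using two_E_mult_pole_pair[OF l s, of j] by (simp add: f_def b_def)
  qed
  have "complex_of_real (\<Prod>j\<in>{1..I}. 2 * E j) * pf_coeff b (poles I) (l, s)
      = (of_real (2 * E l) * (1 / (b (l, s) - b (l, - s))))
        * (\<Prod>j\<in>{1..I} - {l}. of_real (2 * E j) * f j)"
    unfolding P coeff by (simp add: prod.distrib mult_ac)
  also have "\<dots> = of_real s * dterm I p (E(l := - s * E l)) l"
    unfolding residue_l residues_j ..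
  finally show ?thesis
    unfolding b_def .
qed

lemma T_mult_matsubara_sum_pole:
  assumes j: "j \<in> {1..I}" and s: "s \<in> {-1, 1::real}"
  shows "of_real T * matsubara_sum T (pole p E (j, s))
           = - of_real s * (1 / 2 + of_real (bose T (E j)))"
proof -
  obtain m where m: "uvar p j = 2 * pi * T * of_int m"
    using j uvar_matsubara by auto
  have "s * E j \<noteq> 0"
    using s E_gt_0[OF j] by auto
  then have "of_real T * matsubara_sum T (pole p E (j, s)) = - (1 / 2 + of_real (bose T (s * E j)))"
    unfolding pole_def fst_conv snd_conv by (rule T_mult_matsubara_sum[OF T_pos _ m])
  moreover have "bose T (- E j) = - 1 - bose T (E j)"
  proof -
    have "exp (E j / T) \<noteq> 1"
      using T_pos E_gt_0[OF j] by simp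
    then show ?thesis
      by (simp add: bose_def exp_minus field_simps)
  qed
  ultimately show ?thesis
    using s by auto
qed

lemma pf_coeff_poles:
  assumes "j \<in> {1..I}"
  shows "complex_of_real (\<Prod>j\<in>{1..I}. 2 * E j) * pf_coeff (pole p E) (poles I) (j, -1)
           = - dterm I p E j"
    and "complex_of_real (\<Prod>j\<in>{1..I}. 2 * E j) * pf_coeff (pole p E) (poles I) (j, 1)
           = dterm I p (E(j := - E j)) j"
  using pf_coeff_pole[OF assms, of "-1"] pf_coeff_pole[OF assms, of 1] by simp_all

lemma sum_dterm_reflect:
  "(\<Sum>j\<in>{1..I}. dterm I p (E(j := - E j)) j) = (\<Sum>j\<in>{1..I}. dterm I p E j)"
proof -
  define P where "P = complex_of_real (\<Prod>j\<in>{1..I}. 2 * E j)"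
  define c where "c = pf_coeff (pole p E) (poles I)"
  have "card (poles I) \<ge> 2"
    using I_pos by (simp add: poles_def card_cartesian_product)
  then have "(\<Sum>k\<in>poles I. c k) = 0"
    unfolding c_def using inj_on_pole by (intro sum_pf_coeff_eq_0) (simp_all add: poles_def)
  moreover have "P * (\<Sum>k\<in>poles I. c k)
      = (\<Sum>j\<in>{1..I}. dterm I p (E(j := - E j)) j - dterm I p E j)"
    unfolding sum_poles sum_distrib_left distrib_left
    by (rule sum.cong[OF refl]) (use pf_coeff_poles in \<open>simp add: P_def c_def\<close>)
  ultimately show ?thesis
    by (simp add: sum_subtractf)
qed

lemma sum_onePlusRefl_D0: "(\<Sum>j\<in>{1..I}. onePlusRefl j (D0 I p) E) = 2 * D0 I p E"
proof -
  have "(\<Sum>j\<in>{1..I}. onePlusRefl j (D0 I p) E)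
      = (-1) ^ (I + 1) * ((\<Sum>j\<in>{1..I}. dterm I p E j) + (\<Sum>j\<in>{1..I}. dterm I p (E(j := - E j)) j))"
    by (simp add: onePlusRefl_D0 sum_negf sum.distrib flip: sum_distrib_left)
  then show ?thesis
    unfolding sum_dterm_reflect by (simp add: D0_def)
qed

lemma Dsum_eq_sum_onePlusRefl:
  "complex_of_real (Dsum I p E T)
     = (\<Sum>j\<in>{1..I}. (1 / 2 + complex_of_real (bose T (E j))) * onePlusRefl j (D0 I p) E)"
proof -
  define P where "P = complex_of_real (\<Prod>j\<in>{1..I}. 2 * E j)"
  define c where "c = pf_coeff (pole p E) (poles I)"
  have "of_real (infsum summand UNIV) = (-1) ^ I * (\<Sum>k\<in>poles I. c k * matsubara_sum T (pole p E k))"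
    unfolding c_def using T_pos I_pos Re_pole inj_on_pole summable_summand summand_eq_prod_poles
    by (intro infsum_eq_sum_pf_coeff_matsubara_sum) (auto simp: poles_def)
  then have "of_real (Dsum I p E T)
      = (\<Sum>k\<in>poles I. (-1) ^ I * (P * c k) * (of_real T * matsubara_sum T (pole p E k)))"
    by (simp add: Dsum_def summand_def[abs_def] P_def sum_distrib_left mult_ac)
  also have "\<dots> = (\<Sum>j\<in>{1..I}. (1 / 2 + complex_of_real (bose T (E j))) * onePlusRefl j (D0 I p) E)"
    unfolding sum_poles
  proof (rule sum.cong[OF refl])
    fix j
    assume j: "j \<in> {1..I}"
    have coeff: "P * c (j, -1) = - dterm I p E j" "P * c (j, 1) = dterm I p (E(j := - E j)) j"
      using pf_coeff_poles[OF j] by (simp_all add: P_def c_def)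
    have sums: "of_real T * matsubara_sum T (pole p E (j, -1)) = 1 / 2 + of_real (bose T (E j))"
      "of_real T * matsubara_sum T (pole p E (j, 1)) = - (1 / 2 + of_real (bose T (E j)))"
      using T_mult_matsubara_sum_pole[OF j] by simp_all
    show "(-1) ^ I * (P * c (j, -1)) * (of_real T * matsubara_sum T (pole p E (j, -1)))
        + (-1) ^ I * (P * c (j, 1)) * (of_real T * matsubara_sum T (pole p E (j, 1)))
        = (1 / 2 + complex_of_real (bose T (E j))) * onePlusRefl j (D0 I p) E"
      unfolding coeff sums onePlusRefl_D0[OF j] by (simp add: algebra_simps)
  qed
  finally show ?thesis .
qed

lemma Dsum_eq_D0_plus_bose:
  "complex_of_real (Dsum I p E T)
     = D0 I p E + (\<Sum>j\<in>{1..I}. complex_of_real (bose T (E j)) * onePlusRefl j (D0 I p) E)"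
proof -
  have "(\<Sum>j\<in>{1..I}. 1 / 2 * onePlusRefl j (D0 I p) E) = D0 I p E"
    using sum_onePlusRefl_D0 by (simp flip: sum_divide_distrib)
  then show ?thesis
    unfolding Dsum_eq_sum_onePlusRefl distrib_right sum.distrib by simp
qed

end

theorem mainTheorem2:
  fixes T :: real and I :: nat and E p :: "nat \<Rightarrow> real"
  assumes T_pos: "T > 0"
    and I_ge: "I \<ge> 2"
    and E_pos: "\<forall>j\<in>{1..I}. E j > 0"
    and p_matsubara: "\<forall>j\<in>{1..I}. \<exists>k::int. p j = 2 * pi * T * of_int k"
    and nondeg: "\<forall>j\<in>{1..I}. \<forall>l\<in>{1..I}. \<forall>\<sigma>\<in>{-1, 1::real}. \<forall>\<sigma>'\<in>{-1, 1::real}.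
                   j \<noteq> l \<longrightarrow>
                   \<i> * complex_of_real (uvar p j - uvar p l) + complex_of_real (\<sigma> * E l)
                     + complex_of_real (\<sigma>' * E j) \<noteq> 0"
  shows "(\<forall>i\<in>{1..I}. \<forall>j\<in>{1..I}. i \<noteq> j \<longrightarrow>
            onePlusRefl i (onePlusRefl j (D0 I p)) E = 0)
       \<and> (\<forall>C. C \<subseteq> {1..I} \<and> card C \<ge> 2 \<longrightarrow> prodOnePlusRefl C (D0 I p) E = 0)
       \<and> complex_of_real (Dsum I p E T) =
           D0 I p E + (\<Sum>j\<in>{1..I}. complex_of_real (bose T (E j)) * onePlusRefl j (D0 I p) E)
       \<and> complex_of_real (Dsum I p E T) =
           foldr (\<lambda>j g. bfactor (complex_of_real (bose T (E j))) j \<circ> g) [1..<I+1] id (D0 I p) E"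
proof -
  interpret one_loop T I E p
    using T_pos I_ge E_pos p_matsubara nondeg by unfold_locales auto
  have "foldr (\<lambda>j g. bfactor (complex_of_real (bose T (E j))) j \<circ> g) [1..<I+1] id (D0 I p)
      = (\<lambda>E'. D0 I p E' + (\<Sum>j\<in>set [1..<I+1]. complex_of_real (bose T (E j)) * onePlusRefl j (D0 I p) E'))"
    by (rule foldr_bfactor) (auto intro: onePlusRefl_pair_D0)
  moreover have "set [1..<I+1] = {1..I}"
    by auto
  ultimately show ?thesis
    using onePlusRefl_pair_D0 prodOnePlusRefl_D0 Dsum_eq_D0_plus_bose by simp
qed

end
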